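(* Let $G$ be a graph on $n$ vertices and let $k$ be an integer with $2\leq k\leq n$. If $\psi_k(G)=n-k+1$, then $G$ is connected.
   Context: All graphs are finite, simple and nonempty. For a graph $G$ and a positive integer $k$, a $k$-path vertex cover ($k$-PVC) of $G$ is a set $S$ of vertices such that every path on $k$ vertices in $G$ contains at least one vertex of $S$ (if $G$ has no path on $k$ vertices, the empty set is a $k$-PVC). $\psi_k(G)$ denotes the minimum cardinality of a $k$-PVC of $G$. *)

theory Defs
  imports Main
begin

definition simple_graph :: "'a set \<Rightarrow> ('a \<Rightarrow> 'a \<Rightarrow> bool) \<Rightarrow> bool" where
  "simple_graph V E \<longleftrightarrow> finite V \<and> V \<noteq> {} \<and>
     (\<forall>u v. E u v \<longrightarrow> u \<in> V \<and> v \<in> V) \<and>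
     (\<forall>u v. E u v \<longrightarrow> E v u) \<and> (\<forall>v. \<not> E v v)"

definition is_path :: "'a set \<Rightarrow> ('a \<Rightarrow> 'a \<Rightarrow> bool) \<Rightarrow> 'a list \<Rightarrow> bool" where
  "is_path V E p \<longleftrightarrow> p \<noteq> [] \<and> set p \<subseteq> V \<and> distinct p \<and>
     (\<forall>i. Suc i < length p \<longrightarrow> E (p ! i) (p ! Suc i))"

definition is_kpvc :: "'a set \<Rightarrow> ('a \<Rightarrow> 'a \<Rightarrow> bool) \<Rightarrow> nat \<Rightarrow> 'a set \<Rightarrow> bool" where
  "is_kpvc V E k S \<longleftrightarrow> S \<subseteq> V \<and>
     (\<forall>p. is_path V E p \<and> length p = k \<longrightarrow> set p \<inter> S \<noteq> {})"

definition psi :: "'a set \<Rightarrow> ('a \<Rightarrow> 'a \<Rightarrow> bool) \<Rightarrow> nat \<Rightarrow> nat" where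
  "psi V E k = (LEAST m. \<exists>S. is_kpvc V E k S \<and> card S = m)"

definition connected_graph :: "'a set \<Rightarrow> ('a \<Rightarrow> 'a \<Rightarrow> bool) \<Rightarrow> bool" where
  "connected_graph V E \<longleftrightarrow> (\<forall>u\<in>V. \<forall>v\<in>V. \<exists>p. is_path V E p \<and> hd p = u \<and> last p = v)"

end

theory Submission
  imports Defs
begin

text \<open>If u and v lie in different components, pick any k-set T containing both. A path on
  k vertices avoiding V - T would have to visit all of T, hence both u and v, and its
  segment between them would connect them. So V - T is a k-PVC of size n - k < n - k + 1.\<close>

lemma is_path_segment:
  assumes "is_path V E p" "i \<le> j" "j < length p"
  shows "is_path V E (drop i (take (Suc j) p))"
    and "hd (drop i (take (Suc j) p)) = p ! i"
    and "last (drop i (take (Suc j) p)) = p ! j"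
proof -
  let ?q = "drop i (take (Suc j) p)"
  have len: "length ?q = Suc j - i" using assms by simp
  have nth: "\<And>m. m < length ?q \<Longrightarrow> ?q ! m = p ! (i + m)" using assms by simp
  have "?q \<noteq> []" using len assms by simp
  moreover have "set ?q \<subseteq> V" using assms unfolding is_path_def
    by (meson in_set_dropD in_set_takeD subset_iff)
  moreover have "distinct ?q" using assms unfolding is_path_def by simp
  moreover have "E (?q ! m) (?q ! Suc m)" if "Suc m < length ?q" for m
    using assms(1) nth[of m] nth[of "Suc m"] that len unfolding is_path_def by simp
  ultimately show "is_path V E ?q" unfolding is_path_def by blast
  show "hd ?q = p ! i" using nth[of 0] len assms \<open>?q \<noteq> []\<close> by (simp add: hd_conv_nth)
  show "last ?q = p ! j" using nth[of "length ?q - 1"] len assms \<open>?q \<noteq> []\<close>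
    by (simp add: last_conv_nth)
qed

lemma is_path_rev:
  assumes "is_path V E p" and sym: "\<And>u v. E u v \<Longrightarrow> E v u"
  shows "is_path V E (rev p)"
  unfolding is_path_def
proof (intro conjI allI impI)
  show "rev p \<noteq> []" "set (rev p) \<subseteq> V" "distinct (rev p)"
    using assms(1) unfolding is_path_def by auto
  fix i assume i: "Suc i < length (rev p)"
  let ?n = "length p"
  have "E (p ! (?n - Suc (Suc i))) (p ! Suc (?n - Suc (Suc i)))"
    using assms(1) i unfolding is_path_def by simp
  moreover have "Suc (?n - Suc (Suc i)) = ?n - Suc i" using i by simp
  ultimately have "E (p ! (?n - Suc i)) (p ! (?n - Suc (Suc i)))" using sym by metis
  then show "E (rev p ! i) (rev p ! Suc i)" using i by (simp add: rev_nth)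
qed

lemma is_path_between_vertices_of_path:
  assumes "is_path V E p" "u \<in> set p" "v \<in> set p" and sym: "\<And>u v. E u v \<Longrightarrow> E v u"
  shows "\<exists>q. is_path V E q \<and> hd q = u \<and> last q = v"
proof -
  obtain i j where ij: "i < length p" "j < length p" "p ! i = u" "p ! j = v"
    using assms(2,3) by (metis in_set_conv_nth)
  show ?thesis
  proof (cases "i \<le> j")
    case True
    then show ?thesis using is_path_segment[OF assms(1) True ij(2)] ij by metis
  next
    case False
    let ?q = "drop j (take (Suc i) p)"
    have q: "is_path V E ?q" "hd ?q = v" "last ?q = u"
      using is_path_segment[OF assms(1) _ ij(1), of j] False ij by auto
    then have "?q \<noteq> []" unfolding is_path_def by simp
    then show ?thesis using is_path_rev[OF q(1) sym] q by (metis hd_rev last_rev)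
  qed
qed

lemma psi_le_card_kpvc:
  assumes "is_kpvc V E k S"
  shows "psi V E k \<le> card S"
  unfolding psi_def using assms by (metis (mono_tags, lifting) Least_le)

lemma is_kpvc_complement_of_disconnected_set:
  assumes sym: "\<And>u v. E u v \<Longrightarrow> E v u"
    and "finite T" "card T = k" "u \<in> T" "v \<in> T"
    and disconnected: "\<nexists>p. is_path V E p \<and> hd p = u \<and> last p = v"
  shows "is_kpvc V E k (V - T)"
  unfolding is_kpvc_def
proof (intro conjI allI impI)
  fix p assume p: "is_path V E p \<and> length p = k"
  show "set p \<inter> (V - T) \<noteq> {}"
  proof
    assume "set p \<inter> (V - T) = {}"
    then have "set p \<subseteq> T" using p unfolding is_path_def by auto
    moreover have "card (set p) = card T" using p assms(3) unfolding is_path_def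
      by (simp add: distinct_card)
    ultimately have "set p = T" using assms(2) by (simp add: card_subset_eq)
    then show False
      using is_path_between_vertices_of_path[OF conjunct1[OF p] _ _ sym] assms(4,5) disconnected
      by blast
  qed
qed auto

theorem mainTheorem9:
  fixes V :: "'a set" and E :: "'a \<Rightarrow> 'a \<Rightarrow> bool" and k :: nat
  assumes "simple_graph V E"
    and "2 \<le> k" and "k \<le> card V"
    and "psi V E k = card V - k + 1"
  shows "connected_graph V E"
proof (rule ccontr)
  assume "\<not> connected_graph V E"
  then obtain u v where uv: "u \<in> V" "v \<in> V"
    and disconnected: "\<nexists>p. is_path V E p \<and> hd p = u \<and> last p = v"
    unfolding connected_graph_def by blast
  have fin: "finite V" and sym: "\<And>u v. E u v \<Longrightarrow> E v u"
    using assms(1) unfolding simple_graph_def by auto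
  have "u \<noteq> v"
  proof
    assume "u = v"
    have "is_path V E [u]" using uv unfolding is_path_def by simp
    then show False using disconnected \<open>u = v\<close> by fastforce
  qed
  have "card (V - {u, v}) = card V - 2" using uv \<open>u \<noteq> v\<close> fin by (simp add: card_Diff_subset)
  then obtain W where W: "W \<subseteq> V - {u, v}" "card W = k - 2"
    using assms(3) by (metis obtain_subset_with_card_n diff_le_mono)
  define T where "T = insert u (insert v W)"
  have "T \<subseteq> V" "finite T" using W uv fin unfolding T_def by (auto intro: finite_subset)
  moreover have "card T = k"
    using W \<open>u \<noteq> v\<close> assms(2) \<open>finite T\<close> unfolding T_def by (auto simp: card_insert_if)
  ultimately have "psi V E k \<le> card V - k"
    using psi_le_card_kpvc[OF is_kpvc_complement_of_disconnected_set[OF sym _ _ _ _ disconnected]]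
      card_Diff_subset[of T V]
    unfolding T_def by force
  then show False using assms(4) by simp
qed

end
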